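(* Assume that the graph Laplacian $\mathbf{L}$ has exactly $r$ distinct eigenvalues. A signal $f\in\mathcal{A}_{\mathbf{L}}$ is a positive semi-definite (respectively positive definite) function if and only if the $r\times r$ Hankel matrix $\mathbf{H}_r(f)$ is positive semi-definite (respectively positive definite), where $$\mathbf{H}_r(x)=\big(f_{\mathbb{1}}^\intercal\mathbf{L}^{i+j-2}x\big)_{i,j=1}^{r}.$$
   Context: Let $G$ be a graph with vertices $v_1,\dots,v_n$, symmetric non-negative weighted adjacency matrix $\mathbf{A}$, degree matrix $\mathbf{D}=\mathrm{diag}(\sum_k\mathbf{A}_{ik})$ (positive), and normalized Laplacian $\mathbf{L}=\mathbf{I}_n-\mathbf{D}^{-1/2}\mathbf{A}\mathbf{D}^{-1/2}$. Signals are vectors in $\mathcal{L}(G)\cong\mathbb{R}^n$ with standard basis $e_1,\dots,e_n$. Fix an orthonormal eigendecomposition $\mathbf{L}=\mathbf{U}\,\mathrm{diag}(\lambda_1,\dots,\lambda_n)\mathbf{U}^\intercal$ with columns $u_1,\dots,u_n$. Fourier transform $\hat{x}=\mathbf{U}^\intercal x$; convolution operator $\mathbf{C}_x=\mathbf{U}\,\mathrm{diag}(\hat{x})\mathbf{U}^\intercal$; $f_{\mathbb{1}}=\sum_{k=1}^n u_k$; $\mathcal{A}_{\mathbf{L}}=\mathrm{span}\{f_{\mathbb{1}},\mathbf{L}f_{\mathbb{1}},\dots,\mathbf{L}^{n-1}f_{\mathbb{1}}\}$. For $f\in\mathcal{L}(G)$ let $(\mathbf{K}_f)_{ij}=(\mathbf{C}_{e_j}f)(v_i)$;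 $f$ is called a positive semi-definite (positive definite) function if $\mathbf{K}_f$ is symmetric and positive semi-definite (strictly positive definite). *)

theory Defs
  imports "HOL-Analysis.Analysis"
begin

text \<open>Vertices are indexed by a finite type 'n (n = CARD('n)); signals are real^'n.\<close>

definition diag_mat :: "real ^ 'n \<Rightarrow> real ^ 'n ^ 'n" where
  "diag_mat v = (\<chi> i j. if i = j then v $ i else 0)"

definition mpow :: "real ^ 'n ^ 'n \<Rightarrow> nat \<Rightarrow> real ^ 'n ^ 'n" where
  "mpow M k = ((\<lambda>X. M ** X) ^^ k) (mat 1)"

definition degree_vec :: "real ^ 'n ^ 'n \<Rightarrow> real ^ 'n" where
  "degree_vec A = (\<chi> i. \<Sum>k\<in>UNIV. A $ i $ k)"

definition norm_laplacian :: "real ^ 'n ^ 'n \<Rightarrow> real ^ 'n ^ 'n" where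
  "norm_laplacian A =
     mat 1 - diag_mat (\<chi> i. 1 / sqrt (degree_vec A $ i)) ** A
             ** diag_mat (\<chi> i. 1 / sqrt (degree_vec A $ i))"

definition gft :: "real ^ 'n ^ 'n \<Rightarrow> real ^ 'n \<Rightarrow> real ^ 'n" where
  "gft U x = transpose U *v x"

definition conv_op :: "real ^ 'n ^ 'n \<Rightarrow> real ^ 'n \<Rightarrow> real ^ 'n ^ 'n" where
  "conv_op U x = U ** diag_mat (gft U x) ** transpose U"

definition f_one :: "real ^ 'n ^ 'n \<Rightarrow> real ^ 'n" where
  "f_one U = (\<Sum>k\<in>UNIV. column k U)"

definition krylov_space :: "real ^ 'n ^ 'n \<Rightarrow> real ^ 'n ^ 'n \<Rightarrow> (real ^ 'n) set" where
  "krylov_space L U = span {mpow L k *v f_one U | k. k < CARD('n)}"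

definition kernel_mat :: "real ^ 'n ^ 'n \<Rightarrow> real ^ 'n \<Rightarrow> real ^ 'n ^ 'n" where
  "kernel_mat U f = (\<chi> i j. (conv_op U (axis j 1) *v f) $ i)"

definition psd_mat :: "real ^ 'n ^ 'n \<Rightarrow> bool" where
  "psd_mat M \<longleftrightarrow> transpose M = M \<and> (\<forall>x. 0 \<le> x \<bullet> (M *v x))"

definition pd_mat :: "real ^ 'n ^ 'n \<Rightarrow> bool" where
  "pd_mat M \<longleftrightarrow> transpose M = M \<and> (\<forall>x. x \<noteq> 0 \<longrightarrow> 0 < x \<bullet> (M *v x))"

definition psd_function :: "real ^ 'n ^ 'n \<Rightarrow> real ^ 'n \<Rightarrow> bool" where
  "psd_function U f \<longleftrightarrow> psd_mat (kernel_mat U f)"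

definition pd_function :: "real ^ 'n ^ 'n \<Rightarrow> real ^ 'n \<Rightarrow> bool" where
  "pd_function U f \<longleftrightarrow> pd_mat (kernel_mat U f)"

text \<open>r x r matrices represented as nat => nat => real with indices 0..r-1.\<close>
definition psd_fin :: "nat \<Rightarrow> (nat \<Rightarrow> nat \<Rightarrow> real) \<Rightarrow> bool" where
  "psd_fin r H \<longleftrightarrow> (\<forall>i<r. \<forall>j<r. H i j = H j i) \<and>
     (\<forall>c :: nat \<Rightarrow> real. 0 \<le> (\<Sum>i<r. \<Sum>j<r. c i * H i j * c j))"

definition pd_fin :: "nat \<Rightarrow> (nat \<Rightarrow> nat \<Rightarrow> real) \<Rightarrow> bool" where
  "pd_fin r H \<longleftrightarrow> (\<forall>i<r. \<forall>j<r. H i j = H j i) \<and>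
     (\<forall>c :: nat \<Rightarrow> real. (\<exists>i<r. c i \<noteq> 0) \<longrightarrow> 0 < (\<Sum>i<r. \<Sum>j<r. c i * H i j * c j))"

text \<open>Hankel matrix H_r(x), 0-based: entry (i,j) = f_1^T L^(i+j) x.\<close>
definition hankel :: "real ^ 'n ^ 'n \<Rightarrow> real ^ 'n ^ 'n \<Rightarrow> real ^ 'n \<Rightarrow> nat \<Rightarrow> nat \<Rightarrow> real" where
  "hankel L U x i j = f_one U \<bullet> (mpow L (i + j) *v x)"

end

theory Submission
  imports Defs "HOL-Computational_Algebra.Polynomial"
begin

text \<open>
  Write \<open>L = U diag(\<lambda>) U\<^sup>T\<close> and \<open>\<hat>f = U\<^sup>T f\<close>. Then \<open>K\<^sub>f = U diag(\<hat>f) U\<^sup>T\<close>, so \<open>f\<close> is a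
  positive semi-definite (definite) function iff \<open>\<hat>f \<ge> 0\<close> (\<open>\<hat>f > 0\<close>). For \<open>f \<in> \<A>\<^sub>L\<close>
  we have \<open>\<hat>f\<^sub>k = p(\<lambda>\<^sub>k)\<close> for a polynomial \<open>p\<close>, so \<open>\<hat>f\<close> is constant on eigenspaces, and
  \<open>H\<^sub>r(f)\<close> is the moment matrix \<open>(\<Sum>\<^sub>\<mu> \<mu>\<^bsup>i+j\<^esup> w\<^sub>\<mu>)\<close> of the weights
  \<open>w\<^sub>\<mu> = m\<^sub>\<mu> \<hat>f(\<mu>)\<close> at the \<open>r\<close> distinct eigenvalues \<open>\<mu>\<close> (\<open>m\<^sub>\<mu>\<close> the multiplicity).
  Its quadratic form is \<open>c\<^sup>T H c = \<Sum>\<^sub>\<mu> w\<^sub>\<mu> p\<^sub>c(\<mu>)\<^sup>2\<close> with \<open>p\<^sub>c = \<Sum>\<^sub>i\<^sub><\<^sub>r c\<^sub>i x\<^sup>i\<close>,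
  and polynomials of degree \<open>< r\<close> take arbitrary values at \<open>r\<close> nodes, so \<open>H\<^sub>r(f)\<close> is
  positive semi-definite (definite) iff all \<open>w\<^sub>\<mu> \<ge> 0\<close> (\<open>w\<^sub>\<mu> > 0\<close>).
\<close>

lemma matrix_vector_mult_diag_mat: "diag_mat a *v x = (\<chi> i. a $ i * x $ i)"
  unfolding diag_mat_def matrix_vector_mult_def vec_eq_iff
  by (simp add: if_distrib[of "\<lambda>x. x * _"] cong: if_cong)

lemma diag_mat_mult_diag_mat: "diag_mat a ** diag_mat b = diag_mat (\<chi> i. a $ i * b $ i)"
  unfolding diag_mat_def matrix_matrix_mult_def vec_eq_iff
  by (auto simp: if_distrib[of "\<lambda>x. x * _"] if_distrib[of "\<lambda>x. _ * x"] cong: if_cong)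

lemma diag_mat_one: "diag_mat (\<chi> i. 1) = mat 1"
  by (simp add: diag_mat_def mat_def vec_eq_iff)

lemma transpose_diag_mat [simp]: "transpose (diag_mat a) = diag_mat a"
  by (simp add: diag_mat_def transpose_def vec_eq_iff)

lemma mpow_0 [simp]: "mpow M 0 = mat 1"
  by (simp add: mpow_def)

lemma mpow_Suc [simp]: "mpow M (Suc m) = M ** mpow M m"
  by (simp add: mpow_def)

lemma orthogonal_matrix_vector_cancel:
  fixes U :: "real ^ 'n ^ 'n"
  assumes "orthogonal_matrix U"
  shows "transpose U *v (U *v x) = x" and "U *v (transpose U *v x) = x"
  using assms by (simp_all only: orthogonal_matrix_def matrix_vector_mul_assoc matrix_vector_mul_lid)

lemma inner_matrix_vector_transpose:
  fixes U :: "real ^ 'n ^ 'n"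
  shows "x \<bullet> (U *v y) = (transpose U *v x) \<bullet> y"
  by (metis dot_lmul_matrix transpose_matrix_vector)

lemma mpow_orthogonal_diag:
  fixes U :: "real ^ 'n ^ 'n"
  assumes "orthogonal_matrix U"
  shows "mpow (U ** diag_mat d ** transpose U) m = U ** diag_mat (\<chi> k. d $ k ^ m) ** transpose U"
proof (induction m)
  case 0
  then show ?case
    using assms by (simp add: diag_mat_one orthogonal_matrix_def)
next
  case (Suc m)
  have "U ** diag_mat d ** transpose U ** (U ** diag_mat (\<chi> k. d $ k ^ m) ** transpose U)
      = U ** (diag_mat d ** (transpose U ** U) ** diag_mat (\<chi> k. d $ k ^ m)) ** transpose U"
    by (simp add: matrix_mul_assoc)
  also have "\<dots> = U ** diag_mat (\<chi> k. d $ k ^ Suc m) ** transpose U"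
    using assms by (simp add: orthogonal_matrix_def diag_mat_mult_diag_mat)
  finally show ?case
    by (simp add: Suc)
qed

lemma quadratic_form_orthogonal_diag:
  fixes U :: "real ^ 'n ^ 'n"
  shows "x \<bullet> ((U ** diag_mat a ** transpose U) *v x)
       = (\<Sum>k\<in>UNIV. a $ k * ((transpose U *v x) $ k)\<^sup>2)"
proof -
  have "x \<bullet> ((U ** diag_mat a ** transpose U) *v x)
      = (transpose U *v x) \<bullet> (diag_mat a *v (transpose U *v x))"
    by (simp only: inner_matrix_vector_transpose matrix_vector_mul_assoc[symmetric])
  then show ?thesis
    by (simp add: matrix_vector_mult_diag_mat inner_vec_def power2_eq_square mult_ac)
qed

lemma quadratic_form_orthogonal_diag_column:
  fixes U :: "real ^ 'n ^ 'n"
  assumes "orthogonal_matrix U"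
  shows "(U *v axis k 1) \<bullet> ((U ** diag_mat a ** transpose U) *v (U *v axis k 1)) = a $ k"
  unfolding quadratic_form_orthogonal_diag orthogonal_matrix_vector_cancel[OF assms]
  by (simp add: axis_def if_distrib[of "\<lambda>x. _ * x\<^sup>2"] cong: if_cong)

lemma psd_mat_orthogonal_diag_iff:
  fixes U :: "real ^ 'n ^ 'n"
  assumes "orthogonal_matrix U"
  shows "psd_mat (U ** diag_mat a ** transpose U) \<longleftrightarrow> (\<forall>k. 0 \<le> a $ k)"
proof
  assume "psd_mat (U ** diag_mat a ** transpose U)"
  then show "\<forall>k. 0 \<le> a $ k"
    unfolding psd_mat_def by (metis quadratic_form_orthogonal_diag_column[OF assms])
next
  assume "\<forall>k. 0 \<le> a $ k"
  then show "psd_mat (U ** diag_mat a ** transpose U)"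
    unfolding psd_mat_def quadratic_form_orthogonal_diag
    by (simp add: matrix_transpose_mul matrix_mul_assoc sum_nonneg)
qed

lemma pd_mat_orthogonal_diag_iff:
  fixes U :: "real ^ 'n ^ 'n"
  assumes U: "orthogonal_matrix U"
  shows "pd_mat (U ** diag_mat a ** transpose U) \<longleftrightarrow> (\<forall>k. 0 < a $ k)"
proof
  assume pd: "pd_mat (U ** diag_mat a ** transpose U)"
  show "\<forall>k. 0 < a $ k"
  proof
    fix k
    have "U *v axis k 1 \<noteq> 0"
      by (metis orthogonal_matrix_vector_cancel(1)[OF U] matrix_vector_mult_0_right axis_eq_0_iff
          zero_neq_one)
    then show "0 < a $ k"
      using pd unfolding pd_mat_def by (metis quadratic_form_orthogonal_diag_column[OF U])
  qed
next
  assume pos: "\<forall>k. 0 < a $ k"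
  have "0 < (\<Sum>k\<in>UNIV. a $ k * ((transpose U *v x) $ k)\<^sup>2)" if "x \<noteq> 0" for x
  proof -
    obtain k where k: "(transpose U *v x) $ k \<noteq> 0"
      using \<open>x \<noteq> 0\<close> orthogonal_matrix_vector_cancel(2)[OF U, of x]
      by (metis matrix_vector_mult_0_right vec_eq_iff zero_index)
    show ?thesis
      using pos k by (intro sum_pos2[of _ k]) (auto simp: less_imp_le)
  qed
  then show "pd_mat (U ** diag_mat a ** transpose U)"
    unfolding pd_mat_def quadratic_form_orthogonal_diag
    by (simp add: matrix_transpose_mul matrix_mul_assoc)
qed

lemma kernel_mat_eq: "kernel_mat U f = U ** diag_mat (gft U f) ** transpose U"
proof -
  have "conv_op U (axis j 1) *v f = (U ** diag_mat (gft U f) ** transpose U) *v axis j 1" for j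
  proof -
    have "conv_op U (axis j 1) *v f = U *v (diag_mat (gft U (axis j 1)) *v gft U f)"
      unfolding conv_op_def gft_def by (simp only: matrix_vector_mul_assoc matrix_mul_assoc)
    also have "\<dots> = U *v (diag_mat (gft U f) *v gft U (axis j 1))"
      by (simp only: matrix_vector_mult_diag_mat mult.commute)
    also have "\<dots> = (U ** diag_mat (gft U f) ** transpose U) *v axis j 1"
      unfolding gft_def by (simp only: matrix_vector_mul_assoc matrix_mul_assoc)
    finally show ?thesis .
  qed
  then show ?thesis
    unfolding kernel_mat_def by (simp add: matrix_vector_mult_basis column_def vec_eq_iff)
qed

lemma quadratic_form_moment_matrix:
  fixes S :: "'a::comm_semiring_1 set"
  shows "(\<Sum>i<r. \<Sum>j<r. c i * (\<Sum>\<mu>\<in>S. \<mu> ^ (i + j) * w \<mu>) * c j)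
       = (\<Sum>\<mu>\<in>S. w \<mu> * (\<Sum>i<r. c i * \<mu> ^ i)\<^sup>2)"
proof -
  have "(\<Sum>i<r. \<Sum>j<r. c i * (\<Sum>\<mu>\<in>S. \<mu> ^ (i + j) * w \<mu>) * c j)
      = (\<Sum>i<r. \<Sum>j<r. \<Sum>\<mu>\<in>S. w \<mu> * ((c i * \<mu> ^ i) * (c j * \<mu> ^ j)))"
    by (simp add: sum_distrib_left sum_distrib_right power_add mult_ac)
  also have "\<dots> = (\<Sum>\<mu>\<in>S. \<Sum>i<r. \<Sum>j<r. w \<mu> * ((c i * \<mu> ^ i) * (c j * \<mu> ^ j)))"
    by (simp only: sum.swap[where A = S])
  also have "\<dots> = (\<Sum>\<mu>\<in>S. w \<mu> * (\<Sum>i<r. c i * \<mu> ^ i)\<^sup>2)"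
    unfolding power2_eq_square sum_product by (simp only: sum_distrib_left)
  finally show ?thesis .
qed

lemma poly_eq_sum_lessThan:
  fixes p :: "'a::comm_semiring_1 poly"
  assumes "degree p < r"
  shows "poly p x = (\<Sum>i<r. coeff p i * x ^ i)"
  unfolding poly_altdef
  by (rule sum.mono_neutral_left) (use assms in \<open>auto simp: coeff_eq_0\<close>)

lemma lagrange_basis_coeffs:
  fixes S :: "'a::field set"
  assumes "finite S" and "\<mu>\<^sub>0 \<in> S" and "card S = r"
  obtains c where "\<And>\<mu>. \<mu> \<in> S \<Longrightarrow> (\<Sum>i<r. c i * \<mu> ^ i) = (if \<mu> = \<mu>\<^sub>0 then 1 else 0)"
proof -
  define p where "p = smult (1 / (\<Prod>\<nu>\<in>S - {\<mu>\<^sub>0}. \<mu>\<^sub>0 - \<nu>)) (\<Prod>\<nu>\<in>S - {\<mu>\<^sub>0}. [:- \<nu>, 1:])"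
  have "degree p \<le> card (S - {\<mu>\<^sub>0})"
    unfolding p_def degree_smult_eq
    using degree_prod_sum_le[of "S - {\<mu>\<^sub>0}" "\<lambda>\<nu>. [:- \<nu>, 1:]"] assms(1) by auto
  also have "\<dots> < r"
    using assms by (metis card_Diff1_less)
  finally have "degree p < r" .
  moreover have "poly p \<mu> = (if \<mu> = \<mu>\<^sub>0 then 1 else 0)" if "\<mu> \<in> S" for \<mu>
    using assms(1) that by (auto simp: p_def poly_prod)
  ultimately show ?thesis
    using that[of "coeff p"] poly_eq_sum_lessThan by metis
qed

lemma exists_node_poly_sum_nonzero:
  fixes S :: "'a::idom set"
  assumes "finite S" and "card S = r" and "\<exists>i<r. c i \<noteq> 0"
  shows "\<exists>\<mu>\<in>S. (\<Sum>i<r. c i * \<mu> ^ i) \<noteq> 0"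
proof (rule ccontr)
  assume roots: "\<not> ?thesis"
  define p where "p = (\<Sum>i<r. monom (c i) i)"
  have coeff_p: "coeff p i = (if i < r then c i else 0)" for i
    unfolding p_def by (simp add: coeff_sum)
  then have "p \<noteq> 0"
    using assms(3) by (metis coeff_0)
  have "degree p < r"
    using assms(3) coeff_p by (intro degree_lessI) auto
  have "S \<subseteq> {x. poly p x = 0}"
    using roots poly_eq_sum_lessThan[OF \<open>degree p < r\<close>] coeff_p by auto
  then have "card S \<le> card {x. poly p x = 0}"
    by (intro card_mono poly_roots_finite \<open>p \<noteq> 0\<close>)
  also have "\<dots> \<le> degree p"
    by (rule card_poly_roots_bound[OF \<open>p \<noteq> 0\<close>])
  finally show False
    using assms(2) \<open>degree p < r\<close> by linarith
qed

lemma moment_matrix_form_selects_weight: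
  fixes S :: "'a::field set"
  assumes "finite S" and "\<mu>\<^sub>0 \<in> S" and "card S = r"
  obtains c where "\<exists>i<r. c i \<noteq> 0"
    and "(\<Sum>i<r. \<Sum>j<r. c i * (\<Sum>\<mu>\<in>S. \<mu> ^ (i + j) * w \<mu>) * c j) = w \<mu>\<^sub>0"
proof -
  obtain c where c: "\<And>\<mu>. \<mu> \<in> S \<Longrightarrow> (\<Sum>i<r. c i * \<mu> ^ i) = (if \<mu> = \<mu>\<^sub>0 then 1 else 0)"
    using lagrange_basis_coeffs[OF assms] by blast
  have "\<exists>i<r. c i \<noteq> 0"
  proof (rule ccontr)
    assume "\<not> (\<exists>i<r. c i \<noteq> 0)"
    then have "(\<Sum>i<r. c i * \<mu>\<^sub>0 ^ i) = 0"
      by simp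
    then show False
      using c[OF assms(2)] by simp
  qed
  moreover have "(\<Sum>\<mu>\<in>S. w \<mu> * (\<Sum>i<r. c i * \<mu> ^ i)\<^sup>2) = (\<Sum>\<mu>\<in>S. if \<mu> = \<mu>\<^sub>0 then w \<mu>\<^sub>0 else 0)"
    by (rule sum.cong) (simp_all add: c)
  ultimately show ?thesis
    using that assms(1,2) by (simp add: quadratic_form_moment_matrix)
qed

lemma psd_fin_moment_matrix_iff:
  fixes S :: "real set"
  assumes "finite S" and "card S = r"
  shows "psd_fin r (\<lambda>i j. \<Sum>\<mu>\<in>S. \<mu> ^ (i + j) * w \<mu>) \<longleftrightarrow> (\<forall>\<mu>\<in>S. 0 \<le> w \<mu>)"
proof
  assume psd: "psd_fin r (\<lambda>i j. \<Sum>\<mu>\<in>S. \<mu> ^ (i + j) * w \<mu>)"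
  show "\<forall>\<mu>\<in>S. 0 \<le> w \<mu>"
  proof
    fix \<mu>\<^sub>0
    assume "\<mu>\<^sub>0 \<in> S"
    then obtain c where "(\<Sum>i<r. \<Sum>j<r. c i * (\<Sum>\<mu>\<in>S. \<mu> ^ (i + j) * w \<mu>) * c j) = w \<mu>\<^sub>0"
      using moment_matrix_form_selects_weight[OF assms(1) _ assms(2)] by blast
    moreover have "0 \<le> (\<Sum>i<r. \<Sum>j<r. c i * (\<Sum>\<mu>\<in>S. \<mu> ^ (i + j) * w \<mu>) * c j)"
      using psd unfolding psd_fin_def by blast
    ultimately show "0 \<le> w \<mu>\<^sub>0"
      by simp
  qed
next
  assume "\<forall>\<mu>\<in>S. 0 \<le> w \<mu>"
  then show "psd_fin r (\<lambda>i j. \<Sum>\<mu>\<in>S. \<mu> ^ (i + j) * w \<mu>)"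
    unfolding psd_fin_def quadratic_form_moment_matrix by (simp add: add.commute sum_nonneg)
qed

lemma pd_fin_moment_matrix_iff:
  fixes S :: "real set"
  assumes "finite S" and "card S = r"
  shows "pd_fin r (\<lambda>i j. \<Sum>\<mu>\<in>S. \<mu> ^ (i + j) * w \<mu>) \<longleftrightarrow> (\<forall>\<mu>\<in>S. 0 < w \<mu>)"
proof
  assume pd: "pd_fin r (\<lambda>i j. \<Sum>\<mu>\<in>S. \<mu> ^ (i + j) * w \<mu>)"
  show "\<forall>\<mu>\<in>S. 0 < w \<mu>"
  proof
    fix \<mu>\<^sub>0
    assume "\<mu>\<^sub>0 \<in> S"
    then obtain c where "\<exists>i<r. c i \<noteq> 0"
      and "(\<Sum>i<r. \<Sum>j<r. c i * (\<Sum>\<mu>\<in>S. \<mu> ^ (i + j) * w \<mu>) * c j) = w \<mu>\<^sub>0"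
      using moment_matrix_form_selects_weight[OF assms(1) _ assms(2)] by blast
    moreover have "0 < (\<Sum>i<r. \<Sum>j<r. c i * (\<Sum>\<mu>\<in>S. \<mu> ^ (i + j) * w \<mu>) * c j)"
      using pd \<open>\<exists>i<r. c i \<noteq> 0\<close> unfolding pd_fin_def by blast
    ultimately show "0 < w \<mu>\<^sub>0"
      by simp
  qed
next
  assume pos: "\<forall>\<mu>\<in>S. 0 < w \<mu>"
  have "0 < (\<Sum>\<mu>\<in>S. w \<mu> * (\<Sum>i<r. c i * \<mu> ^ i)\<^sup>2)" if nonzero: "\<exists>i<r. c i \<noteq> 0" for c
  proof -
    obtain \<mu> where "\<mu> \<in> S" and "(\<Sum>i<r. c i * \<mu> ^ i) \<noteq> 0"
      using exists_node_poly_sum_nonzero[OF assms nonzero] by blast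
    then show ?thesis
      using pos assms(1) by (intro sum_pos2[of _ \<mu>]) (auto simp: less_imp_le)
  qed
  then show "pd_fin r (\<lambda>i j. \<Sum>\<mu>\<in>S. \<mu> ^ (i + j) * w \<mu>)"
    unfolding pd_fin_def quadratic_form_moment_matrix by (simp add: add.commute)
qed

lemma f_one_eq: "f_one U = U *v vec 1"
  by (simp add: f_one_def vec_eq_iff column_def matrix_vector_mult_def)

lemma gft_mpow_f_one:
  fixes U :: "real ^ 'n ^ 'n"
  assumes "orthogonal_matrix U"
  shows "gft U (mpow (U ** diag_mat (\<chi> k. lam k) ** transpose U) m *v f_one U) = (\<chi> k. lam k ^ m)"
  unfolding gft_def mpow_orthogonal_diag[OF assms] f_one_eq
  unfolding matrix_vector_mul_assoc[symmetric] orthogonal_matrix_vector_cancel[OF assms]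
  by (simp add: matrix_vector_mult_diag_mat)

(* The defining condition cannot be given to the simplifier: as a rewrite rule it loops. *)
lemma subspace_eq_on_level_sets: "subspace {v :: real ^ 'n. \<forall>i j. lam i = lam j \<longrightarrow> v $ i = v $ j}"
proof (rule subspaceI)
  fix x y :: "real ^ 'n" and c :: real
  assume x: "x \<in> {v. \<forall>i j. lam i = lam j \<longrightarrow> v $ i = v $ j}"
    and y: "y \<in> {v. \<forall>i j. lam i = lam j \<longrightarrow> v $ i = v $ j}"
  then show "x + y \<in> {v. \<forall>i j. lam i = lam j \<longrightarrow> v $ i = v $ j}"
    unfolding mem_Collect_eq vector_add_component by metis
  show "c *\<^sub>R x \<in> {v. \<forall>i j. lam i = lam j \<longrightarrow> v $ i = v $ j}"
    using x unfolding mem_Collect_eq vector_scaleR_component by metis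
qed simp

lemma gft_krylov_constant_on_eigenspaces:
  fixes U :: "real ^ 'n ^ 'n"
  assumes "orthogonal_matrix U"
    and "f \<in> krylov_space (U ** diag_mat (\<chi> k. lam k) ** transpose U) U"
    and "lam i = lam j"
  shows "gft U f $ i = gft U f $ j"
proof -
  let ?C = "{v :: real ^ 'n. \<forall>i j. lam i = lam j \<longrightarrow> v $ i = v $ j}"
  have "subspace (gft U -` ?C)"
    unfolding gft_def
    by (rule linear_subspace_vimage[OF matrix_vector_mul_linear subspace_eq_on_level_sets])
  moreover have "{mpow (U ** diag_mat (\<chi> k. lam k) ** transpose U) k *v f_one U | k. k < CARD('n)}
      \<subseteq> gft U -` ?C"
    by (auto simp: gft_mpow_f_one[OF assms(1)])
  ultimately have "gft U f \<in> ?C"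
    using assms(2) span_minimal unfolding krylov_space_def by blast
  then show ?thesis
    using assms(3) by blast
qed

lemma hankel_orthogonal_diag:
  fixes U :: "real ^ 'n ^ 'n"
  assumes "orthogonal_matrix U"
  shows "hankel (U ** diag_mat (\<chi> k. lam k) ** transpose U) U f i j
       = (\<Sum>\<mu>\<in>range lam. \<mu> ^ (i + j) * (\<Sum>k | lam k = \<mu>. gft U f $ k))"
proof -
  have "hankel (U ** diag_mat (\<chi> k. lam k) ** transpose U) U f i j
      = (U *v vec 1) \<bullet> (U *v (diag_mat (\<chi> k. lam k ^ (i + j)) *v gft U f))"
    unfolding hankel_def mpow_orthogonal_diag[OF assms] f_one_eq gft_def
    by (simp only: matrix_vector_mul_assoc matrix_mul_assoc vec_lambda_beta)
  also have "\<dots> = (\<Sum>k\<in>UNIV. lam k ^ (i + j) * gft U f $ k)"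
    unfolding inner_matrix_vector_transpose[of "U *v vec 1"] orthogonal_matrix_vector_cancel[OF assms]
    by (simp add: inner_vec_def matrix_vector_mult_diag_mat)
  also have "\<dots> = (\<Sum>\<mu>\<in>range lam. \<Sum>k | lam k = \<mu>. lam k ^ (i + j) * gft U f $ k)"
    using sum.image_gen[of UNIV "\<lambda>k. lam k ^ (i + j) * gft U f $ k" lam] by simp
  also have "\<dots> = (\<Sum>\<mu>\<in>range lam. \<mu> ^ (i + j) * (\<Sum>k | lam k = \<mu>. gft U f $ k))"
    by (simp add: sum_distrib_left)
  finally show ?thesis .
qed

lemma sum_level_set_const:
  fixes a :: "real ^ 'n"
  assumes "\<And>i j. lam i = lam j \<Longrightarrow> a $ i = a $ j"
  shows "(\<Sum>k | lam k = lam i. a $ k) = real (card {k. lam k = lam i}) * a $ i"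
proof -
  have "(\<Sum>k | lam k = lam i. a $ k) = (\<Sum>k | lam k = lam i. a $ i)"
    by (rule sum.cong[OF refl], rule assms) simp
  then show ?thesis
    by simp
qed

lemma card_level_set_pos: "0 < real (card {k::'a::finite. lam k = lam i})"
  by (auto simp: card_gt_0_iff)

lemma level_sums_nonneg_iff:
  fixes a :: "real ^ 'n"
  assumes "\<And>i j. lam i = lam j \<Longrightarrow> a $ i = a $ j"
  shows "(\<forall>\<mu>\<in>range lam. 0 \<le> (\<Sum>k | lam k = \<mu>. a $ k)) \<longleftrightarrow> (\<forall>k. 0 \<le> a $ k)"
proof -
  have "0 \<le> (\<Sum>k | lam k = lam i. a $ k) \<longleftrightarrow> 0 \<le> a $ i" for i
    using mult_le_cancel_left_pos[OF card_level_set_pos[of lam i], of 0 "a $ i"]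
    by (simp add: sum_level_set_const[OF assms])
  then show ?thesis
    by auto
qed

lemma level_sums_pos_iff:
  fixes a :: "real ^ 'n"
  assumes "\<And>i j. lam i = lam j \<Longrightarrow> a $ i = a $ j"
  shows "(\<forall>\<mu>\<in>range lam. 0 < (\<Sum>k | lam k = \<mu>. a $ k)) \<longleftrightarrow> (\<forall>k. 0 < a $ k)"
proof -
  have "0 < (\<Sum>k | lam k = lam i. a $ k) \<longleftrightarrow> 0 < a $ i" for i
    using mult_less_cancel_left_pos[OF card_level_set_pos[of lam i], of 0 "a $ i"]
    by (simp add: sum_level_set_const[OF assms])
  then show ?thesis
    by auto
qed

theorem theorem3:
  fixes A U :: "real ^ 'n ^ 'n" and lam :: "'n \<Rightarrow> real" and f :: "real ^ 'n" and r :: nat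
  assumes sym: "transpose A = A"
    and nonneg: "\<forall>i j. 0 \<le> A $ i $ j"
    and deg_pos: "\<forall>i. 0 < degree_vec A $ i"
    and orth: "transpose U ** U = mat 1"
    and eig: "norm_laplacian A = U ** diag_mat (\<chi> k. lam k) ** transpose U"
    and r_def: "card (range lam) = r"
    and f_in: "f \<in> krylov_space (norm_laplacian A) U"
  shows "(psd_function U f \<longleftrightarrow> psd_fin r (hankel (norm_laplacian A) U f)) \<and>
         (pd_function U f \<longleftrightarrow> pd_fin r (hankel (norm_laplacian A) U f))"
proof -
  have U_orth: "orthogonal_matrix U"
    using orth orthogonal_matrix by blast
  define w where "w \<mu> = (\<Sum>k | lam k = \<mu>. gft U f $ k)" for \<mu>
  have const: "\<And>i j. lam i = lam j \<Longrightarrow> gft U f $ i = gft U f $ j"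
    using gft_krylov_constant_on_eigenspaces[OF U_orth f_in[unfolded eig]] .
  have hankel_moment: "hankel (norm_laplacian A) U f = (\<lambda>i j. \<Sum>\<mu>\<in>range lam. \<mu> ^ (i + j) * w \<mu>)"
    by (intro ext) (simp only: eig hankel_orthogonal_diag[OF U_orth] w_def)
  have fin: "finite (range lam)"
    by simp
  have "psd_function U f \<longleftrightarrow> (\<forall>k. 0 \<le> gft U f $ k)"
    using psd_mat_orthogonal_diag_iff[OF U_orth, of "gft U f"]
    by (simp only: psd_function_def kernel_mat_eq)
  also have "\<dots> \<longleftrightarrow> (\<forall>\<mu>\<in>range lam. 0 \<le> w \<mu>)"
    using level_sums_nonneg_iff[of lam "gft U f", OF const] by (simp only: w_def)
  also have "\<dots> \<longleftrightarrow> psd_fin r (hankel (norm_laplacian A) U f)"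
    unfolding hankel_moment by (rule psd_fin_moment_matrix_iff[OF fin r_def, of w, symmetric])
  finally have psd: "psd_function U f \<longleftrightarrow> psd_fin r (hankel (norm_laplacian A) U f)" .
  have "pd_function U f \<longleftrightarrow> (\<forall>k. 0 < gft U f $ k)"
    using pd_mat_orthogonal_diag_iff[OF U_orth, of "gft U f"]
    by (simp only: pd_function_def kernel_mat_eq)
  also have "\<dots> \<longleftrightarrow> (\<forall>\<mu>\<in>range lam. 0 < w \<mu>)"
    using level_sums_pos_iff[of lam "gft U f", OF const] by (simp only: w_def)
  also have "\<dots> \<longleftrightarrow> pd_fin r (hankel (norm_laplacian A) U f)"
    unfolding hankel_moment by (rule pd_fin_moment_matrix_iff[OF fin r_def, of w, symmetric])
  finally have pd: "pd_function U f \<longleftrightarrow> pd_fin r (hankel (norm_laplacian A) U f)" .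
  show ?thesis
    by (rule conjI[OF psd pd])
qed

end
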